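(* There exists a recursive coloring function $c_0:\mathbb{N}\rightarrow \{0,1\}^2$ such that for every infinite set $A\subseteq\mathbb{Z}^+$ that does not have weak apartness, $FS^{\leq 2}(A)$ is not monochromatic under $c_0$ (i.e. $A$ is not a solution to $c_0$ for $\mathrm{HT}^{\leq 2}$).
   Context: For $x=\sum_{i=0}^{k}2^{n_i}\in\mathbb{Z}^+$ with $n_0<\cdots<n_k$, set $\mu(x)=n_k$ and $\lambda(x)=n_0$. For each $n$, $B^n=\{x\in\mathbb{Z}^+:\mu(x)=n\}$. A set $A$ has weak apartness if for every natural number $m$, $B^m\cap A$ has at most one element, and for every natural number $l$, there are at most two $x\in A$ with $\lambda(x)=l$. $FS^{\leq 2}(A)=\{\sum_{x\in F}x: F\subseteq A,\ F\text{ nonempty},\ |F|\leq 2\}$. *)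

theory Defs
  imports Main
begin

fun PR :: "(nat list \<Rightarrow> nat) \<Rightarrow> (nat list \<Rightarrow> nat) \<Rightarrow> nat list \<Rightarrow> nat" where
  "PR g h [] = 0"
| "PR g h (0 # xs) = g xs"
| "PR g h (Suc y # xs) = h (PR g h (y # xs) # y # xs)"

inductive recfn :: "nat \<Rightarrow> (nat list \<Rightarrow> nat) \<Rightarrow> bool" where
  zero: "recfn n (\<lambda>_. 0)"
| succ: "recfn 1 (\<lambda>xs. Suc (hd xs))"
| proj: "i < n \<Longrightarrow> recfn n (\<lambda>xs. xs ! i)"
| comp: "recfn m f \<Longrightarrow> length gs = m \<Longrightarrow> (\<forall>g\<in>set gs. recfn n g)
          \<Longrightarrow> recfn n (\<lambda>xs. f (map (\<lambda>g. g xs) gs))"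
| prim: "recfn n g \<Longrightarrow> recfn (Suc (Suc n)) h \<Longrightarrow> recfn (Suc n) (PR g h)"
| mu: "recfn (Suc n) g \<Longrightarrow> (\<forall>xs. length xs = n \<longrightarrow> (\<exists>y. g (y # xs) = 0))
          \<Longrightarrow> recfn n (\<lambda>xs. LEAST y. g (y # xs) = 0)"

definition computable :: "(nat \<Rightarrow> nat) \<Rightarrow> bool" where
  "computable c \<longleftrightarrow> (\<exists>f. recfn 1 f \<and> (\<forall>x. c x = f [x]))"

text \<open>Colours in {0,1}^2 are pairs of booleans, coded as numbers 0..3 for computability.\<close>
definition code2 :: "bool \<times> bool \<Rightarrow> nat" where
  "code2 p = 2 * of_bool (fst p) + of_bool (snd p)"

definition recursive_coloring :: "(nat \<Rightarrow> bool \<times> bool) \<Rightarrow> bool" where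
  "recursive_coloring c \<longleftrightarrow> computable (\<lambda>x. code2 (c x))"

text \<open>For x = sum of 2^(n_i), n_0<...<n_k: mu x = n_k, lambda x = n_0 (x > 0).\<close>
definition bmu :: "nat \<Rightarrow> nat" where
  "bmu x = Max {n. bit x n}"

definition blambda :: "nat \<Rightarrow> nat" where
  "blambda x = Min {n. bit x n}"

definition Bblock :: "nat \<Rightarrow> nat set" where
  "Bblock n = {x. 0 < x \<and> bmu x = n}"

definition weak_apart :: "nat set \<Rightarrow> bool" where
  "weak_apart A \<longleftrightarrow>
     (\<forall>m. finite (Bblock m \<inter> A) \<and> card (Bblock m \<inter> A) \<le> 1) \<and>
     (\<forall>l. finite {x\<in>A. blambda x = l} \<and> card {x\<in>A. blambda x = l} \<le> 2)"

definition FS2 :: "nat set \<Rightarrow> nat set" where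
  "FS2 A = {\<Sum>F | F. F \<subseteq> A \<and> F \<noteq> {} \<and> finite F \<and> card F \<le> 2}"

definition monochromatic :: "(nat \<Rightarrow> 'c) \<Rightarrow> nat set \<Rightarrow> bool" where
  "monochromatic c S \<longleftrightarrow> (\<exists>col. \<forall>s\<in>S. c s = col)"

end

theory Submission
  imports Defs
begin

text \<open>
  Color x by the parities of \<mu>(x) and \<lambda>(x). If two distinct x, y in A have
  \<mu>(x) = \<mu>(y) = m, then 2^(m+1) \<le> x + y < 2^(m+2), so \<mu>(x + y) = m + 1 and x, x + y get
  different colors. If three distinct elements of A have \<lambda> = l, they are 2^l times
  odd numbers, two of which, a and b, agree modulo 4; then a + b is twice an odd number, so
  \<lambda>(x + y) = l + 1 and again x, x + y get different colors.
  Both \<mu> and \<lambda> are found by an unbounded search over the quotients x div 2^k, so the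
  coloring is recursive.
\<close>

text \<open>Agreement with a general recursive function only on argument lists of the right length
  makes this notion extensional there, so closure rules can be stated for arbitrary HOL terms.\<close>

definition recursive :: "nat \<Rightarrow> (nat list \<Rightarrow> nat) \<Rightarrow> bool" where
  "recursive n f \<longleftrightarrow> (\<exists>g. recfn n g \<and> (\<forall>xs. length xs = n \<longrightarrow> g xs = f xs))"

lemma recursive_cong:
  "recursive n f \<Longrightarrow> (\<And>xs. length xs = n \<Longrightarrow> f xs = g xs) \<Longrightarrow> recursive n g"
  unfolding recursive_def by metis

lemma recursive_unary_cong:
  "recursive 1 f \<Longrightarrow> (\<And>x. f [x] = g x) \<Longrightarrow> recursive 1 (\<lambda>xs. g (xs ! 0))"
  by (erule recursive_cong) (auto simp: length_Suc_conv)

lemma recursive_binary_cong: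
  "recursive 2 f \<Longrightarrow> (\<And>x y. f [x, y] = g x y) \<Longrightarrow> recursive 2 (\<lambda>xs. g (xs ! 0) (xs ! 1))"
  by (erule recursive_cong) (auto simp: length_Suc_conv numeral_2_eq_2)

lemma recursive_zero: "recursive n (\<lambda>_. 0)"
  unfolding recursive_def using recfn.zero by blast

lemma recursive_proj: "i < n \<Longrightarrow> recursive n (\<lambda>xs. xs ! i)"
  unfolding recursive_def using recfn.proj by blast

lemma recursive_comp:
  assumes "recursive m f" and "length gs = m" and "\<forall>g\<in>set gs. recursive n g"
  shows "recursive n (\<lambda>xs. f (map (\<lambda>g. g xs) gs))"
proof -
  obtain F where F: "recfn m F" "\<forall>xs. length xs = m \<longrightarrow> F xs = f xs"
    using assms(1) unfolding recursive_def by blast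
  obtain G where G: "\<forall>g\<in>set gs. recfn n (G g) \<and> (\<forall>xs. length xs = n \<longrightarrow> G g xs = g xs)"
    using bchoice[OF assms(3)[unfolded recursive_def]] by blast
  have "recfn n (\<lambda>xs. F (map (\<lambda>g. g xs) (map G gs)))"
    using F(1) assms(2) G by (intro recfn.comp) auto
  moreover have "F (map (\<lambda>g. g xs) (map G gs)) = f (map (\<lambda>g. g xs) gs)" if "length xs = n" for xs
    using that F(2) G assms(2) by (simp cong: map_cong)
  ultimately show ?thesis
    unfolding recursive_def by (intro exI[of _ "\<lambda>xs. F (map (\<lambda>g. g xs) (map G gs))"]) auto
qed

lemma recursive_comp1:
  "recursive 1 (\<lambda>xs. f (xs ! 0)) \<Longrightarrow> recursive n g \<Longrightarrow> recursive n (\<lambda>xs. f (g xs))"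
  using recursive_comp[of 1 "\<lambda>xs. f (xs ! 0)" "[g]" n] by simp

lemma recursive_comp2:
  "recursive 2 (\<lambda>xs. f (xs ! 0) (xs ! 1)) \<Longrightarrow> recursive n g \<Longrightarrow> recursive n h \<Longrightarrow>
     recursive n (\<lambda>xs. f (g xs) (h xs))"
  using recursive_comp[of 2 "\<lambda>xs. f (xs ! 0) (xs ! 1)" "[g, h]" n] by simp

lemma recursive_prim:
  assumes "recursive n g" and "recursive (Suc (Suc n)) h"
  shows "recursive (Suc n) (PR g h)"
proof -
  obtain G where G: "recfn n G" "\<forall>xs. length xs = n \<longrightarrow> G xs = g xs"
    using assms(1) unfolding recursive_def by blast
  obtain H where H: "recfn (Suc (Suc n)) H" "\<forall>xs. length xs = Suc (Suc n) \<longrightarrow> H xs = h xs"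
    using assms(2) unfolding recursive_def by blast
  have "PR G H (y # ys) = PR g h (y # ys)" if "length ys = n" for y ys
    using that G(2) H(2) by (induction y) auto
  then have "PR G H xs = PR g h xs" if "length xs = Suc n" for xs
    using that by (auto simp: length_Suc_conv)
  with recfn.prim[OF G(1) H(1)] show ?thesis
    unfolding recursive_def by blast
qed

lemma recursive_mu:
  assumes "recursive (Suc n) g" and "\<And>xs. length xs = n \<Longrightarrow> \<exists>y. g (y # xs) = 0"
  shows "recursive n (\<lambda>xs. LEAST y. g (y # xs) = 0)"
proof -
  obtain G where G: "recfn (Suc n) G" "\<forall>xs. length xs = Suc n \<longrightarrow> G xs = g xs"
    using assms(1) unfolding recursive_def by blast
  then have "recfn n (\<lambda>xs. LEAST y. G (y # xs) = 0)"
    using assms(2) by (intro recfn.mu) auto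
  with G(2) show ?thesis
    unfolding recursive_def by (intro exI[of _ "\<lambda>xs. LEAST y. G (y # xs) = 0"]) auto
qed

lemma recursive_Suc:
  assumes "recursive n g"
  shows "recursive n (\<lambda>xs. Suc (g xs))"
proof -
  have "recursive 1 (\<lambda>xs. Suc (hd xs))"
    unfolding recursive_def using recfn.succ by blast
  then have "recursive 1 (\<lambda>xs. Suc (xs ! 0))"
    by (rule recursive_cong) (auto simp: length_Suc_conv)
  from recursive_comp1[OF this assms] show ?thesis .
qed

lemma recursive_is_zero:
  assumes "recursive n g"
  shows "recursive n (\<lambda>xs. of_bool (g xs = 0))"
proof -
  have "recursive 1 (PR (\<lambda>_. Suc 0) (\<lambda>_. 0))"
    using recursive_prim[of 0] recursive_Suc[OF recursive_zero] recursive_zero by simp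
  moreover have "PR (\<lambda>_. Suc 0) (\<lambda>_. 0) [x] = of_bool (x = 0)" for x
    by (cases x) simp_all
  ultimately have "recursive 1 (\<lambda>xs. of_bool (xs ! 0 = 0))"
    by (rule recursive_unary_cong)
  from recursive_comp1[OF this assms] show ?thesis .
qed

lemma recursive_mod2:
  assumes "recursive n g"
  shows "recursive n (\<lambda>xs. g xs mod 2)"
proof -
  have "recursive 2 (\<lambda>xs. of_bool (xs ! 0 = 0))"
    by (intro recursive_is_zero recursive_proj) simp
  then have "recursive 1 (PR (\<lambda>_. 0) (\<lambda>xs. of_bool (xs ! 0 = 0)))"
    using recursive_prim[of 0] recursive_zero by (simp add: numeral_2_eq_2)
  moreover have "PR (\<lambda>_. 0) (\<lambda>xs. of_bool (xs ! 0 = 0)) [x] = x mod 2" for x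
    by (induction x) (auto simp: mod_Suc)
  ultimately have "recursive 1 (\<lambda>xs. xs ! 0 mod 2)"
    by (rule recursive_unary_cong)
  from recursive_comp1[OF this assms] show ?thesis .
qed

lemma recursive_add:
  assumes "recursive n g" and "recursive n h"
  shows "recursive n (\<lambda>xs. g xs + h xs)"
proof -
  have "recursive 3 (\<lambda>xs. Suc (xs ! 0))"
    by (intro recursive_Suc recursive_proj) simp
  then have "recursive 2 (PR (\<lambda>xs. xs ! 0) (\<lambda>xs. Suc (xs ! 0)))"
    using recursive_prim[of 1] recursive_proj[of 0 1] by (simp add: numeral_2_eq_2 numeral_3_eq_3)
  moreover have "PR (\<lambda>xs. xs ! 0) (\<lambda>xs. Suc (xs ! 0)) [x, y] = x + y" for x y
    by (induction x) auto
  ultimately have "recursive 2 (\<lambda>xs. xs ! 0 + xs ! 1)"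
    by (rule recursive_binary_cong[where g = "(+)"])
  from recursive_comp2[where f = "(+)", OF this assms] show ?thesis .
qed

lemma recursive_div2:
  assumes "recursive n g"
  shows "recursive n (\<lambda>xs. g xs div 2)"
proof -
  have "recursive 2 (\<lambda>xs. xs ! 0 + xs ! 1 mod 2)"
    by (intro recursive_add recursive_mod2 recursive_proj) simp_all
  then have "recursive 1 (PR (\<lambda>_. 0) (\<lambda>xs. xs ! 0 + xs ! 1 mod 2))"
    using recursive_prim[of 0] recursive_zero by (simp add: numeral_2_eq_2)
  moreover have "PR (\<lambda>_. 0) (\<lambda>xs. xs ! 0 + xs ! 1 mod 2) [x] = x div 2" for x
    by (induction x) (auto, presburger)
  ultimately have "recursive 1 (\<lambda>xs. xs ! 0 div 2)"
    by (rule recursive_unary_cong)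
  from recursive_comp1[OF this assms] show ?thesis .
qed

lemma recursive_div_exp2:
  assumes "recursive n g" and "recursive n h"
  shows "recursive n (\<lambda>xs. h xs div 2 ^ g xs)"
proof -
  have "recursive 3 (\<lambda>xs. xs ! 0 div 2)"
    by (intro recursive_div2 recursive_proj) simp
  then have "recursive 2 (PR (\<lambda>xs. xs ! 0) (\<lambda>xs. xs ! 0 div 2))"
    using recursive_prim[of 1] recursive_proj[of 0 1] by (simp add: numeral_2_eq_2 numeral_3_eq_3)
  moreover have "PR (\<lambda>xs. xs ! 0) (\<lambda>xs. xs ! 0 div 2) [k, x] = x div 2 ^ k" for k x
    by (induction k) (simp_all flip: div_mult2_eq add: mult.commute)
  ultimately have "recursive 2 (\<lambda>xs. xs ! 1 div 2 ^ xs ! 0)"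
    by (rule recursive_binary_cong[where g = "\<lambda>k x. x div 2 ^ k"])
  from recursive_comp2[where f = "\<lambda>k x. x div 2 ^ k", OF this assms] show ?thesis .
qed

lemma bit_imp_exp_le_nat: "bit (x::nat) n \<Longrightarrow> 2 ^ n \<le> x"
  by (metis bit_iff_odd div_less even_zero not_le)

lemma finite_bit_nat: "finite {n. bit (x::nat) n}"
proof (rule finite_subset)
  show "{n. bit x n} \<subseteq> {..<x}"
  proof
    fix n assume "n \<in> {n. bit x n}"
    then have "n < 2 ^ n" "2 ^ n \<le> x" using less_exp bit_imp_exp_le_nat by auto
    then have "n < x" by (rule order.strict_trans2)
    then show "n \<in> {..<x}" by simp
  qed
qed simp

lemma bit_exp_mult_nat: "bit (2 ^ l * a :: nat) k \<longleftrightarrow> l \<le> k \<and> bit a (k - l)"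
  by (metis bit_push_bit_iff_nat push_bit_eq_mult mult.commute)

lemma ex_exp_mult_odd: "0 < (x::nat) \<Longrightarrow> \<exists>l a. x = 2 ^ l * a \<and> odd a"
proof (induction x rule: less_induct)
  case (less x)
  show ?case
  proof (cases "odd x")
    case True
    then show ?thesis by (intro exI[of _ 0] exI[of _ x]) simp
  next
    case False
    then obtain y where y: "x = 2 * y" by blast
    with less.prems obtain l a where "y = 2 ^ l * a" "odd a"
      using less.IH[of y] by auto
    with y show ?thesis by (intro exI[of _ "Suc l"] exI[of _ a]) simp
  qed
qed

text \<open>Minimisation forms of \<mu> and \<lambda>, agreeing with them on positive numbers; the disjunct
  \<^term>\<open>x = 0\<close> makes the search for \<^term>\<open>low_bit\<close> total.\<close>

definition high_bit :: "nat \<Rightarrow> nat" where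
  "high_bit x = (LEAST k. x div 2 ^ Suc k = 0)"

definition low_bit :: "nat \<Rightarrow> nat" where
  "low_bit x = (LEAST k. x = 0 \<or> odd (x div 2 ^ k))"

lemma bmu_eqI:
  assumes "2 ^ n \<le> x" and "x < 2 ^ Suc n"
  shows "bmu x = n"
proof -
  have "x div 2 ^ n = 1"
    using assms by (intro div_nat_eqI) simp_all
  then have "bit x n" by (simp add: bit_iff_odd)
  moreover have "m \<le> n" if "bit x m" for m
    using bit_imp_exp_le_nat[OF that] assms(2) power_strict_increasing_iff[of "2::nat" m "Suc n"] by simp
  ultimately show ?thesis
    unfolding bmu_def by (intro Max_eqI finite_bit_nat) auto
qed

lemma high_bit_eqI:
  assumes "2 ^ n \<le> x" and "x < 2 ^ Suc n"
  shows "high_bit x = n"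
  unfolding high_bit_def
proof (rule Least_equality)
  show "x div 2 ^ Suc n = 0" using assms(2) by simp
  fix k assume "x div 2 ^ Suc k = 0"
  then have "(2::nat) ^ n < 2 ^ Suc k" using assms(1) by (simp add: div_eq_0_iff)
  then show "n \<le> k" using power_strict_increasing_iff[of "2::nat" n "Suc k"] by simp
qed

lemma bmu_bounds:
  assumes "0 < x"
  shows "2 ^ bmu x \<le> x \<and> x < 2 ^ Suc (bmu x)"
proof -
  obtain n where "2 ^ n \<le> x" "x < 2 ^ Suc n"
    using ex_power_ivl1[of 2 x] assms by auto
  then show ?thesis using bmu_eqI by simp
qed

lemma high_bit_eq_bmu: "0 < x \<Longrightarrow> high_bit x = bmu x"
  using bmu_bounds high_bit_eqI by blast

lemma bmu_add:
  assumes "0 < x" and "0 < y" and "bmu x = bmu y"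
  shows "bmu (x + y) = Suc (bmu x)"
  using bmu_bounds[OF assms(1)] bmu_bounds[OF assms(2)] assms(3) by (intro bmu_eqI) auto

lemma blambda_exp_mult_odd: "odd a \<Longrightarrow> blambda (2 ^ l * a) = l"
  unfolding blambda_def by (rule Min_eqI) (auto simp: finite_bit_nat bit_exp_mult_nat bit_0)

lemma low_bit_exp_mult_odd: "odd a \<Longrightarrow> low_bit (2 ^ l * a) = l"
  unfolding low_bit_def by (rule Least_equality) (auto simp: bit_exp_mult_nat bit_0 simp flip: bit_iff_odd)

lemma low_bit_eq_blambda:
  assumes "0 < x"
  shows "low_bit x = blambda x"
proof -
  obtain l a where "x = 2 ^ l * a" "odd a" using ex_exp_mult_odd[OF assms] by blast
  then show ?thesis by (simp add: low_bit_exp_mult_odd blambda_exp_mult_odd)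
qed

lemma odd_div_exp_blambda:
  assumes "0 < x"
  shows "odd (x div 2 ^ blambda x)"
proof -
  obtain l a where "x = 2 ^ l * a" "odd a" using ex_exp_mult_odd[OF assms] by blast
  then show ?thesis by (simp add: blambda_exp_mult_odd)
qed

lemma blambda_add:
  assumes "0 < x" and "0 < y" and "blambda x = blambda y"
    and "x div 2 ^ blambda x mod 4 = y div 2 ^ blambda y mod 4"
  shows "blambda (x + y) = Suc (blambda x)"
proof -
  obtain l a where x: "x = 2 ^ l * a" "odd a" using ex_exp_mult_odd[OF assms(1)] by blast
  obtain l' b where y: "y = 2 ^ l' * b" "odd b" using ex_exp_mult_odd[OF assms(2)] by blast
  have lx: "blambda x = l" using x blambda_exp_mult_odd by simp
  have ly: "blambda y = l'" using y blambda_exp_mult_odd by simp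
  with lx assms(3) have "l' = l" by simp
  with x y lx ly assms(4) have "a mod 4 = b mod 4" by simp
  with x(2) y(2) have "\<exists>d. a + b = 2 * d \<and> odd d" by presburger
  then obtain d where d: "a + b = 2 * d" "odd d" by blast
  with x y \<open>l' = l\<close> have "x + y = 2 ^ Suc l * d"
    by (simp flip: distrib_left)
  then show ?thesis using lx blambda_exp_mult_odd[OF d(2), of "Suc l"] by simp
qed

lemma recursive_high_bit: "recursive 1 (\<lambda>xs. high_bit (xs ! 0))"
proof -
  have rec: "recursive (Suc 1) (\<lambda>ys. ys ! 1 div 2 ^ Suc (ys ! 0))"
    by (intro recursive_div_exp2 recursive_Suc recursive_proj) simp_all
  have ex: "\<exists>y. (y # xs) ! 1 div 2 ^ Suc ((y # xs) ! 0) = 0" for xs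
  proof
    have "xs ! 0 < 2 ^ xs ! 0" by (rule less_exp)
    also have "\<dots> < 2 ^ Suc (xs ! 0)" by simp
    finally show "(xs ! 0 # xs) ! 1 div 2 ^ Suc ((xs ! 0 # xs) ! 0) = 0" by simp
  qed
  have "recursive 1 (\<lambda>xs. LEAST y. (y # xs) ! 1 div 2 ^ Suc ((y # xs) ! 0) = 0)"
    by (rule recursive_mu[OF rec ex])
  then show ?thesis
    by (rule recursive_cong) (simp add: high_bit_def)
qed

lemma recursive_low_bit: "recursive 1 (\<lambda>xs. low_bit (xs ! 0))"
proof -
  let ?g = "\<lambda>ys. of_bool (of_bool (ys ! 1 = 0) + ys ! 1 div 2 ^ ys ! 0 mod 2 = 0)"
  have g_eq_0: "?g (k # xs) = 0 \<longleftrightarrow> xs ! 0 = 0 \<or> odd (xs ! 0 div 2 ^ k)" for k xs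
    by (auto simp: odd_iff_mod_2_eq_one)
  have rec: "recursive (Suc 1) ?g"
    by (intro recursive_is_zero recursive_add recursive_mod2 recursive_div_exp2 recursive_proj)
      simp_all
  have ex: "\<exists>k. ?g (k # xs) = 0" for xs
  proof (cases "xs ! 0 = 0")
    case False
    then have "?g (blambda (xs ! 0) # xs) = 0"
      unfolding g_eq_0 using odd_div_exp_blambda by simp
    then show ?thesis ..
  qed (simp add: g_eq_0)
  have "recursive 1 (\<lambda>xs. LEAST k. ?g (k # xs) = 0)"
    using recursive_mu[OF rec ex] by simp
  then show ?thesis
    by (rule recursive_cong) (simp only: g_eq_0 low_bit_def)
qed

definition parity_coloring :: "nat \<Rightarrow> bool \<times> bool" where
  "parity_coloring x = (even (high_bit x), even (low_bit x))"

lemma recursive_coloring_parity_coloring: "recursive_coloring parity_coloring"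
proof -
  have "recursive 1 (\<lambda>xs. (of_bool (high_bit (xs ! 0) mod 2 = 0) + of_bool (high_bit (xs ! 0) mod 2 = 0))
      + of_bool (low_bit (xs ! 0) mod 2 = 0))"
    by (intro recursive_add recursive_is_zero recursive_mod2 recursive_high_bit recursive_low_bit)
  then have "recursive 1 (\<lambda>xs. code2 (parity_coloring (xs ! 0)))"
    by (rule recursive_cong) (simp add: code2_def parity_coloring_def even_iff_mod_2_eq_zero)
  then obtain f where "recfn 1 f" "\<forall>xs. length xs = 1 \<longrightarrow> f xs = code2 (parity_coloring (xs ! 0))"
    unfolding recursive_def by blast
  then show ?thesis
    unfolding recursive_coloring_def computable_def by (intro exI[of _ f]) simp
qed

lemma parity_coloring_eq: "0 < x \<Longrightarrow> parity_coloring x = (even (bmu x), even (blambda x))"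
  by (simp add: parity_coloring_def high_bit_eq_bmu low_bit_eq_blambda)

lemma singleton_mem_FS2: "x \<in> A \<Longrightarrow> x \<in> FS2 A"
  unfolding FS2_def by (intro CollectI exI[of _ "{x}"]) auto

lemma add_mem_FS2: "x \<in> A \<Longrightarrow> y \<in> A \<Longrightarrow> x \<noteq> y \<Longrightarrow> x + y \<in> FS2 A"
  unfolding FS2_def by (intro CollectI exI[of _ "{x, y}"]) (auto simp: card_insert_if)

lemma not_monochromatic_FS2I:
  assumes "x \<in> A" and "y \<in> A" and "x \<noteq> y" and "c x \<noteq> c (x + y)"
  shows "\<not> monochromatic c (FS2 A)"
proof
  assume "monochromatic c (FS2 A)"
  then obtain col where "\<forall>s\<in>FS2 A. c s = col"
    unfolding monochromatic_def by blast
  with singleton_mem_FS2[OF assms(1)] add_mem_FS2[OF assms(1-3)] have "c x = c (x + y)"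
    by simp
  with assms(4) show False ..
qed

lemma ex_subset_card_Suc:
  assumes "\<not> (finite S \<and> card S \<le> n)"
  shows "\<exists>T \<subseteq> S. finite T \<and> card T = Suc n"
proof (cases "finite S")
  case True
  with assms have "Suc n \<le> card S" by simp
  then obtain T where "T \<subseteq> S" "card T = Suc n" "finite T"
    by (rule obtain_subset_with_card_n)
  then show ?thesis by blast
next
  case False
  then show ?thesis using infinite_arbitrarily_large[of S "Suc n"] by blast
qed

lemma not_monochromatic_if_large_Bblock:
  assumes "A \<subseteq> {0<..}" and "\<not> (finite (Bblock m \<inter> A) \<and> card (Bblock m \<inter> A) \<le> 1)"
  shows "\<not> monochromatic parity_coloring (FS2 A)"
proof -
  obtain T where T: "T \<subseteq> Bblock m \<inter> A" "card T = Suc 1"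
    using ex_subset_card_Suc[OF assms(2)] by blast
  then obtain x y where "T = {x, y}" "x \<noteq> y"
    unfolding Suc_1 card_2_iff by blast
  with T(1) have xy: "x \<in> Bblock m \<inter> A" "y \<in> Bblock m \<inter> A" "x \<noteq> y"
    by auto
  then have "0 < x" "0 < y" "bmu x = bmu y"
    by (auto simp: Bblock_def)
  then have "bmu (x + y) = Suc (bmu x)"
    by (rule bmu_add)
  then have "parity_coloring x \<noteq> parity_coloring (x + y)"
    using \<open>0 < x\<close> by (simp add: parity_coloring_eq)
  with xy show ?thesis
    by (intro not_monochromatic_FS2I[of x A y]) auto
qed

lemma not_monochromatic_if_large_blambda_class:
  assumes "A \<subseteq> {0<..}" and "\<not> (finite {x\<in>A. blambda x = l} \<and> card {x\<in>A. blambda x = l} \<le> 2)"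
  shows "\<not> monochromatic parity_coloring (FS2 A)"
proof -
  obtain T where T: "T \<subseteq> {x\<in>A. blambda x = l}" "card T = Suc 2"
    using ex_subset_card_Suc[OF assms(2)] by blast
  let ?r = "\<lambda>x. x div 2 ^ l mod 4"
  have "odd (x div 2 ^ l)" if "x \<in> T" for x
  proof -
    from that T(1) assms(1) have "0 < x" "blambda x = l" by auto
    with odd_div_exp_blambda show ?thesis by blast
  qed
  moreover have "n mod 4 = 1 \<or> n mod 4 = 3" if "odd n" for n :: nat
    using that by presburger
  ultimately have "?r ` T \<subseteq> {1, 3}"
    by blast
  then have "\<not> inj_on ?r T"
    using card_inj_on_le[of ?r T "{1, 3}"] T(2) by auto
  then obtain x y where xy: "x \<in> T" "y \<in> T" "x \<noteq> y" "?r x = ?r y"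
    unfolding inj_on_def by blast
  with T(1) assms(1) have "x \<in> A" "y \<in> A" "0 < x" "0 < y" "blambda x = l" "blambda y = l"
    by auto
  with xy(4) have "blambda (x + y) = Suc l"
    using blambda_add[of x y] by simp
  then have "parity_coloring x \<noteq> parity_coloring (x + y)"
    using \<open>0 < x\<close> \<open>blambda x = l\<close> by (simp add: parity_coloring_eq)
  with \<open>x \<in> A\<close> \<open>y \<in> A\<close> xy(3) show ?thesis
    by (rule not_monochromatic_FS2I)
qed

theorem lemma4p1:
  shows "\<exists>c0 :: nat \<Rightarrow> bool \<times> bool. recursive_coloring c0 \<and>
           (\<forall>A. A \<subseteq> {0<..} \<and> infinite A \<and> \<not> weak_apart A
                \<longrightarrow> \<not> monochromatic c0 (FS2 A))"
proof (intro exI[of _ parity_coloring] conjI allI impI)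
  show "recursive_coloring parity_coloring"
    by (rule recursive_coloring_parity_coloring)
  fix A assume A: "A \<subseteq> {0<..} \<and> infinite A \<and> \<not> weak_apart A"
  then consider m where "\<not> (finite (Bblock m \<inter> A) \<and> card (Bblock m \<inter> A) \<le> 1)"
    | l where "\<not> (finite {x\<in>A. blambda x = l} \<and> card {x\<in>A. blambda x = l} \<le> 2)"
    unfolding weak_apart_def by blast
  then show "\<not> monochromatic parity_coloring (FS2 A)"
  proof cases
    case 1
    with A show ?thesis by (intro not_monochromatic_if_large_Bblock) auto
  next
    case 2
    with A show ?thesis by (intro not_monochromatic_if_large_blambda_class) auto
  qed
qed

end
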